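(* Let $P=LU$ be a profinite group with closed subgroups $L,U$, $U$ normal, and let $\exp:\mathfrak l\oplus\mathfrak u\to LU$ be a homeomorphism satisfying conditions (A) and (B), where $\mathfrak l,\mathfrak u$ are subgroups with $\exp(\mathfrak u)=U$. Let $\Omega\in LU\backslash\widehat{\mathfrak l\oplus\mathfrak u}$ correspond via the orbit method to $\tau\in\operatorname{Irr}(LU)$. Then $\tau$ is trivial on $U$ if and only if every $\psi\in\Omega$ is trivial on $\mathfrak u$.
   Context: For a profinite group $G$, an abelian profinite group $\mathfrak g$ and a homeomorphism $\exp:\mathfrak g\to G$ with inverse $\log$: (A) $\operatorname{Ad}_g(x):=\log(g\exp(x)g^{-1})$ defines an action of $G$ on $\mathfrak g$ by group automorphisms; (B) $\exp^*:\mathcal H(G)^G\to\mathcal H(\mathfrak g)^G$ (conjugation-invariant locally constant functions, convolution product) is an algebra isomorphism. Orbit method: for each irreducible smooth $\tau$ there is a unique coadjoint orbit $\Omega\subset\widehat{\mathfrak g}$ (Pontryagin dual) with $\exp^*(\operatorname{ch}_\tau)=|\Omega|^{-1/2}\sum_{\psi\in\Omega}\psi$, and $\tau\mapsto\Omega$ is a bijection $\operatorname{Irr}(G)\to G\backslash\widehat{\mathfrak g}$; $\tau$ "corresponds" to $\Omega$ in this sense. *)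

theory Defs
  imports "HOL-Analysis.Analysis" "HOL-Algebra.Coset"
begin

definition totally_disconnected_space :: "'a topology \<Rightarrow> bool" where
  "totally_disconnected_space T \<longleftrightarrow>
     (\<forall>x\<in>topspace T. connected_component_of_set T x = {x})"

definition profinite_group :: "('a, 'm) monoid_scheme \<Rightarrow> 'a topology \<Rightarrow> bool" where
  "profinite_group G T \<longleftrightarrow>
     group G \<and> topspace T = carrier G \<and>
     continuous_map (prod_topology T T) T (\<lambda>(x, y). x \<otimes>\<^bsub>G\<^esub> y) \<and>
     continuous_map T T (\<lambda>x. inv\<^bsub>G\<^esub> x) \<and>
     compact_space T \<and> Hausdorff_space T \<and> totally_disconnected_space T"

definition locally_constant :: "'a topology \<Rightarrow> ('a \<Rightarrow> 'b) \<Rightarrow> bool" where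
  "locally_constant T f \<longleftrightarrow>
     (\<forall>x\<in>topspace T. \<exists>V. openin T V \<and> x \<in> V \<and> (\<forall>y\<in>V. f y = f x))"

text \<open>For a locally constant function f on a profinite group, f is invariant under
  some open normal subgroup N, and the integral against the Haar probability measure is
  the average of f over the (finitely many) cosets of N.\<close>
definition haar_integral :: "('a, 'm) monoid_scheme \<Rightarrow> 'a topology \<Rightarrow> ('a \<Rightarrow> complex) \<Rightarrow> complex" where
  "haar_integral G T f =
     (let N = (SOME N. N \<lhd> G \<and> openin T N \<and>
                 (\<forall>x\<in>carrier G. \<forall>n\<in>N. f (x \<otimes>\<^bsub>G\<^esub> n) = f x))
      in (\<Sum>C\<in>rcosets\<^bsub>G\<^esub> N. f (SOME y. y \<in> C)) / of_nat (card (rcosets\<^bsub>G\<^esub> N)))"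

definition convolution ::
  "('a, 'm) monoid_scheme \<Rightarrow> 'a topology \<Rightarrow> ('a \<Rightarrow> complex) \<Rightarrow> ('a \<Rightarrow> complex) \<Rightarrow> 'a \<Rightarrow> complex" where
  "convolution G T f h =
     restrict (\<lambda>x. haar_integral G T (\<lambda>y. f y * h (inv\<^bsub>G\<^esub> y \<otimes>\<^bsub>G\<^esub> x))) (carrier G)"

definition log_map :: "('g, 'k) monoid_scheme \<Rightarrow> ('g \<Rightarrow> 'a) \<Rightarrow> 'a \<Rightarrow> 'g" where
  "log_map gl expm = inv_into (carrier gl) expm"

definition Ad :: "('a, 'm) monoid_scheme \<Rightarrow> ('g, 'k) monoid_scheme \<Rightarrow> ('g \<Rightarrow> 'a) \<Rightarrow> 'a \<Rightarrow> 'g \<Rightarrow> 'g" where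
  "Ad G gl expm g x = log_map gl expm (g \<otimes>\<^bsub>G\<^esub> expm x \<otimes>\<^bsub>G\<^esub> inv\<^bsub>G\<^esub> g)"

definition hecke_G_inv :: "('a, 'm) monoid_scheme \<Rightarrow> 'a topology \<Rightarrow> ('a \<Rightarrow> complex) set" where
  "hecke_G_inv G T = {f. f \<in> extensional (carrier G) \<and> locally_constant T f \<and>
      (\<forall>g\<in>carrier G. \<forall>x\<in>carrier G. f (g \<otimes>\<^bsub>G\<^esub> x \<otimes>\<^bsub>G\<^esub> inv\<^bsub>G\<^esub> g) = f x)}"

definition hecke_g_inv ::
  "('a, 'm) monoid_scheme \<Rightarrow> ('g, 'k) monoid_scheme \<Rightarrow> 'g topology \<Rightarrow> ('g \<Rightarrow> 'a) \<Rightarrow> ('g \<Rightarrow> complex) set" where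
  "hecke_g_inv G gl Tg expm = {f. f \<in> extensional (carrier gl) \<and> locally_constant Tg f \<and>
      (\<forall>g\<in>carrier G. \<forall>x\<in>carrier gl. f (Ad G gl expm g x) = f x)}"

definition pullback :: "('g, 'k) monoid_scheme \<Rightarrow> ('g \<Rightarrow> 'a) \<Rightarrow> ('a \<Rightarrow> complex) \<Rightarrow> 'g \<Rightarrow> complex" where
  "pullback gl expm f = restrict (\<lambda>x. f (expm x)) (carrier gl)"

definition condition_A :: "('a, 'm) monoid_scheme \<Rightarrow> ('g, 'k) monoid_scheme \<Rightarrow> ('g \<Rightarrow> 'a) \<Rightarrow> bool" where
  "condition_A G gl expm \<longleftrightarrow>
     (\<forall>g\<in>carrier G. Ad G gl expm g \<in> iso gl gl) \<and>
     (\<forall>x\<in>carrier gl. Ad G gl expm \<one>\<^bsub>G\<^esub> x = x) \<and>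
     (\<forall>g\<in>carrier G. \<forall>h\<in>carrier G. \<forall>x\<in>carrier gl.
        Ad G gl expm (g \<otimes>\<^bsub>G\<^esub> h) x = Ad G gl expm g (Ad G gl expm h x))"

text \<open>Condition (B): exp^* is an algebra isomorphism H(G)^G \<rightarrow> H(gl)^G
  (convolution product, normalized Haar measures).\<close>
definition condition_B ::
  "('a, 'm) monoid_scheme \<Rightarrow> 'a topology \<Rightarrow> ('g, 'k) monoid_scheme \<Rightarrow> 'g topology \<Rightarrow> ('g \<Rightarrow> 'a) \<Rightarrow> bool" where
  "condition_B G T gl Tg expm \<longleftrightarrow>
     bij_betw (pullback gl expm) (hecke_G_inv G T) (hecke_g_inv G gl Tg expm) \<and>
     (\<forall>f\<in>hecke_G_inv G T. \<forall>h\<in>hecke_G_inv G T.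
        pullback gl expm (\<lambda>x. f x + h x) = (\<lambda>x. pullback gl expm f x + pullback gl expm h x) \<and>
        pullback gl expm (convolution G T f h) =
          convolution gl Tg (pullback gl expm f) (pullback gl expm h)) \<and>
     (\<forall>c::complex. \<forall>f\<in>hecke_G_inv G T.
        pullback gl expm (\<lambda>x. c * f x) = (\<lambda>x. c * pullback gl expm f x))"

definition pontryagin_dual :: "('g, 'k) monoid_scheme \<Rightarrow> 'g topology \<Rightarrow> ('g \<Rightarrow> complex) set" where
  "pontryagin_dual gl Tg = {\<psi>. \<psi> \<in> extensional (carrier gl) \<and> continuous_map Tg euclidean \<psi> \<and>
      (\<forall>x\<in>carrier gl. cmod (\<psi> x) = 1) \<and>
      (\<forall>x\<in>carrier gl. \<forall>y\<in>carrier gl. \<psi> (x \<otimes>\<^bsub>gl\<^esub> y) = \<psi> x * \<psi> y)}"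

definition coad ::
  "('a, 'm) monoid_scheme \<Rightarrow> ('g, 'k) monoid_scheme \<Rightarrow> ('g \<Rightarrow> 'a) \<Rightarrow> 'a \<Rightarrow> ('g \<Rightarrow> complex) \<Rightarrow> 'g \<Rightarrow> complex" where
  "coad G gl expm g \<psi> = restrict (\<lambda>x. \<psi> (Ad G gl expm (inv\<^bsub>G\<^esub> g) x)) (carrier gl)"

definition coadjoint_orbits ::
  "('a, 'm) monoid_scheme \<Rightarrow> ('g, 'k) monoid_scheme \<Rightarrow> 'g topology \<Rightarrow> ('g \<Rightarrow> 'a) \<Rightarrow> ('g \<Rightarrow> complex) set set" where
  "coadjoint_orbits G gl Tg expm =
     {(\<lambda>g. coad G gl expm g \<psi>) ` carrier G | \<psi>. \<psi> \<in> pontryagin_dual gl Tg}"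

definition smooth_irreducible_rep ::
  "('a, 'm) monoid_scheme \<Rightarrow> 'a topology \<Rightarrow> ('a \<Rightarrow> complex^'n^'n) \<Rightarrow> bool" where
  "smooth_irreducible_rep G T \<rho> \<longleftrightarrow>
     \<rho> \<one>\<^bsub>G\<^esub> = mat 1 \<and>
     (\<forall>g\<in>carrier G. \<forall>h\<in>carrier G. \<rho> (g \<otimes>\<^bsub>G\<^esub> h) = \<rho> g ** \<rho> h) \<and>
     (\<forall>v. openin T {g\<in>carrier G. \<rho> g *v v = v}) \<and>
     (\<forall>W. vec.subspace W \<and> (\<forall>g\<in>carrier G. \<forall>w\<in>W. \<rho> g *v w \<in> W) \<longrightarrow>
          W = {0} \<or> W = UNIV)"

definition character :: "('a \<Rightarrow> complex^'n^'n) \<Rightarrow> 'a \<Rightarrow> complex" where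
  "character \<rho> g = trace (\<rho> g)"

definition orbit_corresponds ::
  "('g, 'k) monoid_scheme \<Rightarrow> ('g \<Rightarrow> 'a) \<Rightarrow> ('a \<Rightarrow> complex^'n^'n) \<Rightarrow> ('g \<Rightarrow> complex) set \<Rightarrow> bool" where
  "orbit_corresponds gl expm \<rho> \<Omega> \<longleftrightarrow>
     (\<forall>x\<in>carrier gl. character \<rho> (expm x) =
        complex_of_real (1 / sqrt (real (card \<Omega>))) * (\<Sum>\<psi>\<in>\<Omega>. \<psi> x))"

end

theory Submission
  imports Defs
begin

text \<open>By the orbit method, \<open>ch(exp x) = |\<Omega>|\<^sup>-\<^sup>1\<^sup>/\<^sup>2 \<Sum>\<^sub>\<psi>\<^sub>\<in>\<^sub>\<Omega> \<psi> x\<close> is a normalised sum of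
  \<open>|\<Omega>|\<close> unimodular numbers (the orbit consists of one character twisted by the automorphisms
  \<open>Ad g\<close>), so it equals \<open>\<surd>|\<Omega>|\<close> exactly when every \<open>\<psi> x\<close> is 1. Hence \<open>\<Omega>\<close> is trivial on
  \<open>uu\<close> iff the character is constantly \<open>\<surd>|\<Omega>| = ch 1\<close> on \<open>U = exp uu\<close>. This clearly holds
  if \<open>\<tau>\<close> is trivial on \<open>U\<close>. Conversely, a smooth representation of a compact group has finite
  image, so summing the matrices of the finite group \<open>\<tau>(U)\<close> gives a map into the
  \<open>U\<close>-fixed vectors whose trace \<open>|\<tau>(U)| \<surd>|\<Omega>|\<close> is nonzero; the \<open>U\<close>-fixed space is therefore
  nonzero, and being \<open>P\<close>-stable (\<open>U\<close> is normal) it is everything by irreducibility.\<close>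

lemma unimodular_sum_eq_card_iff:
  fixes f :: "'b \<Rightarrow> complex"
  assumes "finite A" and unimodular: "\<And>a. a \<in> A \<Longrightarrow> cmod (f a) = 1"
  shows "sum f A = of_nat (card A) \<longleftrightarrow> (\<forall>a\<in>A. f a = 1)"
proof
  assume sum_eq: "sum f A = of_nat (card A)"
  have Re_le: "0 \<le> 1 - Re (f a)" if "a \<in> A" for a
    using complex_Re_le_cmod[of "f a"] unimodular[OF that] by simp
  have Re_sum_eq: "(\<Sum>a\<in>A. Re (f a)) = (\<Sum>a\<in>A. 1)"
    using arg_cong[OF sum_eq, of Re] by simp
  have "(\<Sum>a\<in>A. 1 - Re (f a)) = (\<Sum>a\<in>A. 1) - (\<Sum>a\<in>A. Re (f a))"
    by (rule sum_subtractf)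
  also have "\<dots> = 0"
    unfolding Re_sum_eq by (rule diff_self)
  finally have "(\<Sum>a\<in>A. 1 - Re (f a)) = 0" .
  then have Re_eq: "\<forall>a\<in>A. 1 - Re (f a) = 0"
    using sum_nonneg_eq_0_iff[OF assms(1), of "\<lambda>a. 1 - Re (f a)"] Re_le by simp
  show "\<forall>a\<in>A. f a = 1"
  proof
    fix a assume a: "a \<in> A"
    then have "Im (f a) = 0"
      using Im_eq_0[of "f a"] unimodular Re_eq by simp
    then show "f a = 1" using Re_eq a by (simp add: complex_eq_iff)
  qed
next
  assume "\<forall>a\<in>A. f a = 1"
  then have "sum f A = (\<Sum>a\<in>A. 1)" by (intro sum.cong) auto
  then show "sum f A = of_nat (card A)" by simp
qed

lemma matrix_vector_mult_axis_nth: "(A *v axis i 1) $ j = (A :: 'a::semiring_1^'n^'m) $ j $ i"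
  by (simp add: matrix_vector_mult_def axis_def if_distrib cong: if_cong)

lemma mat_1_iff_fixes_axes: "(A :: 'a::semiring_1^'n^'n) = mat 1 \<longleftrightarrow> (\<forall>i. A *v axis i 1 = axis i 1)"
proof
  assume "\<forall>i. A *v axis i 1 = axis i 1"
  then have "A $ j $ i = axis i 1 $ j" for i j
    by (metis matrix_vector_mult_axis_nth)
  then show "A = mat 1" by (auto simp: vec_eq_iff mat_def axis_def)
qed simp

lemma matrix_vector_mult_sum_left: "sum f S *v v = (\<Sum>x\<in>S. f x *v v)"
  by (induction S rule: infinite_finite_induct) (simp_all add: matrix_vector_mult_add_rdistrib)

lemma trace_sum: "trace (sum f S) = (\<Sum>x\<in>S. trace (f x :: 'a::comm_semiring_1^'n^'n))"
  by (induction S rule: infinite_finite_induct) (simp_all add: trace_add trace_0[unfolded mat_0])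

lemma finite_image_locally_constant:
  assumes "compact_space T" and "locally_constant T f"
  shows "finite (f ` topspace T)"
proof -
  obtain V where V: "\<And>x. x \<in> topspace T \<Longrightarrow> openin T (V x) \<and> x \<in> V x \<and> (\<forall>y\<in>V x. f y = f x)"
    using assms(2) unfolding locally_constant_def by metis
  have "\<exists>\<F>. finite \<F> \<and> \<F> \<subseteq> V ` topspace T \<and> topspace T \<subseteq> \<Union>\<F>"
    using assms(1) unfolding compact_space_def by (rule compactinD) (use V in auto)
  then obtain X where X: "finite X" "X \<subseteq> topspace T" "topspace T \<subseteq> (\<Union>x\<in>X. V x)"
    unfolding ex_finite_subset_image by blast
  have "f ` topspace T \<subseteq> f ` X"
  proof
    fix z assume "z \<in> f ` topspace T"
    then obtain y x where "z = f y" "x \<in> X" "y \<in> V x" using X(3) by blast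
    then show "z \<in> f ` X" using V X(2) by blast
  qed
  then show ?thesis using X(1) finite_surj by blast
qed

definition fixed_vectors :: "('a \<Rightarrow> 'k::field^'n^'n) \<Rightarrow> 'a set \<Rightarrow> ('k^'n) set" where
  "fixed_vectors \<rho> H = {v. \<forall>h\<in>H. \<rho> h *v v = v}"

lemma subspace_fixed_vectors: "vec.subspace (fixed_vectors \<rho> H)"
  by (simp add: vec.subspace_def fixed_vectors_def vec.add vec.scale)

locale matrix_rep = group G for G (structure) +
  fixes \<rho> :: "'a \<Rightarrow> 'k::field^'n^'n"
  assumes rep_one: "\<rho> \<one> = mat 1"
    and rep_mult: "g \<in> carrier G \<Longrightarrow> h \<in> carrier G \<Longrightarrow> \<rho> (g \<otimes> h) = \<rho> g ** \<rho> h"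
begin

lemma rep_inv_mult: "g \<in> carrier G \<Longrightarrow> \<rho> (inv g) ** \<rho> g = mat 1"
  using rep_mult[of "inv g" g] by (simp add: rep_one)

lemma rep_mult_left_cancel:
  assumes "g \<in> carrier G" and "\<rho> g ** M = \<rho> g ** M'"
  shows "M = M'"
proof -
  have "M = \<rho> (inv g) ** (\<rho> g ** M)"
    using assms(1) by (simp add: matrix_mul_assoc rep_inv_mult)
  also have "\<dots> = \<rho> (inv g) ** (\<rho> g ** M')"
    using assms(2) by simp
  also have "\<dots> = M'"
    using assms(1) by (simp add: matrix_mul_assoc rep_inv_mult)
  finally show ?thesis .
qed

lemma rep_mult_image_subgroup:
  assumes "subgroup H G" and h: "h \<in> H"
  shows "(\<lambda>M. \<rho> h ** M) ` \<rho> ` H = \<rho> ` H"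
proof -
  interpret H: subgroup H G by fact
  have closed: "\<rho> h ** \<rho> u \<in> \<rho> ` H" if "u \<in> H" for u
  proof -
    have "\<rho> h ** \<rho> u = \<rho> (h \<otimes> u)" using that h by (simp add: rep_mult)
    then show ?thesis using that h by blast
  qed
  have onto: "\<rho> u \<in> (\<lambda>M. \<rho> h ** M) ` \<rho> ` H" if "u \<in> H" for u
  proof -
    have "h \<otimes> (inv h \<otimes> u) = u" using that h by (simp flip: m_assoc)
    then have "\<rho> u = \<rho> h ** \<rho> (inv h \<otimes> u)" using that h by (metis rep_mult H.mem_carrier m_closed inv_closed)
    then show ?thesis using that h by blast
  qed
  show ?thesis
    using closed onto by (intro subset_antisym) (auto simp only: image_subset_iff)
qed

lemma fixed_vectors_normal_invariant:
  assumes "N \<lhd> G" and g: "g \<in> carrier G" and v: "v \<in> fixed_vectors \<rho> N"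
  shows "\<rho> g *v v \<in> fixed_vectors \<rho> N"
  unfolding fixed_vectors_def
proof (intro CollectI ballI)
  fix u assume u: "u \<in> N"
  have uc: "u \<in> carrier G" using assms(1) u by (meson normal_imp_subgroup subgroup.mem_carrier)
  have conj: "inv g \<otimes> u \<otimes> g \<in> N" using normal.inv_op_closed1[OF assms(1) g u] .
  have "g \<otimes> (inv g \<otimes> u \<otimes> g) = u \<otimes> g"
    using g uc by (simp flip: m_assoc)
  then have "\<rho> u ** \<rho> g = \<rho> g ** \<rho> (inv g \<otimes> u \<otimes> g)"
    using g uc by (metis rep_mult m_closed inv_closed)
  then have "\<rho> u *v (\<rho> g *v v) = \<rho> g *v (\<rho> (inv g \<otimes> u \<otimes> g) *v v)"
    by (simp add: matrix_vector_mul_assoc)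
  also have "\<dots> = \<rho> g *v v" using conj v by (simp add: fixed_vectors_def)
  finally show "\<rho> u *v (\<rho> g *v v) = \<rho> g *v v" .
qed

lemma sum_rep_image_mult_in_fixed_vectors:
  assumes "subgroup H G" and "finite (\<rho> ` H)"
  shows "(\<Sum>M\<in>\<rho> ` H. M *v v) \<in> fixed_vectors \<rho> H"
  unfolding fixed_vectors_def
proof (intro CollectI ballI)
  fix u assume u: "u \<in> H"
  have uc: "u \<in> carrier G" using assms(1) u by (rule subgroup.mem_carrier)
  have inj: "inj_on (\<lambda>M. \<rho> u ** M) (\<rho> ` H)"
    by (rule inj_onI) (rule rep_mult_left_cancel[OF uc])
  have "\<rho> u *v (\<Sum>M\<in>\<rho> ` H. M *v v) = (\<Sum>M\<in>\<rho> ` H. (\<rho> u ** M) *v v)"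
    by (simp add: vec.sum matrix_vector_mul_assoc)
  also have "\<dots> = (\<Sum>M\<in>(\<lambda>M. \<rho> u ** M) ` \<rho> ` H. M *v v)"
    by (simp add: sum.reindex[OF inj])
  also have "\<dots> = (\<Sum>M\<in>\<rho> ` H. M *v v)"
    by (simp only: rep_mult_image_subgroup[OF assms(1) u])
  finally show "\<rho> u *v (\<Sum>M\<in>\<rho> ` H. M *v v) = (\<Sum>M\<in>\<rho> ` H. M *v v)" .
qed

lemma locally_constant_if_smooth:
  assumes top: "topspace T = carrier G"
    and mult_cont: "continuous_map (prod_topology T T) T (\<lambda>(x, y). x \<otimes> y)"
    and smooth: "\<And>v. openin T {g \<in> carrier G. \<rho> g *v v = v}"
  shows "locally_constant T \<rho>"
  unfolding locally_constant_def
proof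
  fix g assume g: "g \<in> topspace T"
  define K where "K = {h \<in> carrier G. \<rho> h = mat 1}"
  define V where "V = {x \<in> topspace T. inv g \<otimes> x \<in> K}"
  have "K = (\<Inter>i. {h \<in> carrier G. \<rho> h *v axis i 1 = axis i 1})"
    unfolding K_def by (auto simp: mat_1_iff_fixes_axes)
  then have "openin T K" by (simp add: openin_INT2 smooth)
  moreover have "continuous_map T T (\<lambda>x. inv g \<otimes> x)"
    using continuous_map_compose[OF _ mult_cont, of T "\<lambda>x. (inv g, x)"] g top
    by (simp add: o_def continuous_map_pairedI)
  ultimately have "openin T V"
    unfolding V_def by (simp add: openin_continuous_map_preimage)
  moreover have "g \<in> V"
    using g top by (simp add: V_def K_def rep_one)
  moreover have "\<rho> x = \<rho> g" if "x \<in> V" for x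
  proof -
    have x: "x \<in> carrier G" "inv g \<otimes> x \<in> K" using that top by (simp_all add: V_def)
    have "g \<otimes> (inv g \<otimes> x) = x" using x g top by (simp flip: m_assoc)
    then have "\<rho> x = \<rho> g ** \<rho> (inv g \<otimes> x)"
      using x g top by (metis rep_mult m_closed inv_closed)
    then show ?thesis using x(2) by (simp add: K_def)
  qed
  ultimately show "\<exists>V. openin T V \<and> g \<in> V \<and> (\<forall>y\<in>V. \<rho> y = \<rho> g)"
    by blast
qed

end

locale irreducible_matrix_rep =
  matrix_rep G \<rho> for G (structure) and \<rho> :: "'a \<Rightarrow> 'k::field_char_0^'n^'n" +
  assumes irreducible: "vec.subspace W \<Longrightarrow> (\<forall>g\<in>carrier G. \<forall>w\<in>W. \<rho> g *v w \<in> W) \<Longrightarrow> W = {0} \<or> W = UNIV"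
begin

lemma trivial_on_normal_subgroup_if_trace_const:
  assumes "N \<lhd> G" and fin: "finite (\<rho> ` N)"
    and trace_const: "\<And>u. u \<in> N \<Longrightarrow> trace (\<rho> u) = t" and "t \<noteq> 0"
    and "u \<in> N"
  shows "\<rho> u = mat 1"
proof -
  have N: "subgroup N G" using assms(1) by (rule normal_imp_subgroup)
  have "fixed_vectors \<rho> N = {0} \<or> fixed_vectors \<rho> N = UNIV"
    using irreducible[OF subspace_fixed_vectors] fixed_vectors_normal_invariant[OF assms(1)] by blast
  moreover have "fixed_vectors \<rho> N \<noteq> {0}"
  proof
    assume "fixed_vectors \<rho> N = {0}"
    then have "(\<Sum>M\<in>\<rho> ` N. M) *v v = 0" for v
      using sum_rep_image_mult_in_fixed_vectors[OF N fin] by (simp add: matrix_vector_mult_sum_left)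
    then have "(\<Sum>M\<in>\<rho> ` N. M) = 0"
      by (simp add: matrix_eq)
    then have "(\<Sum>M\<in>\<rho> ` N. trace M) = 0"
      by (simp flip: trace_sum add: trace_0[unfolded mat_0])
    moreover have "(\<Sum>M\<in>\<rho> ` N. trace M) = (\<Sum>M\<in>\<rho> ` N. t)"
      using trace_const by (intro sum.cong) auto
    moreover have "card (\<rho> ` N) \<noteq> 0" using fin subgroup.one_closed[OF N] by (simp add: card_eq_0_iff, blast)
    ultimately show False using \<open>t \<noteq> 0\<close> by (simp add: fin)
  qed
  ultimately have "v \<in> fixed_vectors \<rho> N" for v by blast
  then have "\<rho> u *v v = mat 1 *v v" for v
    using \<open>u \<in> N\<close> by (simp add: fixed_vectors_def)
  then show ?thesis by (simp add: matrix_eq)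
qed

end

lemma smooth_irreducible_rep_imp_irreducible_matrix_rep:
  assumes "group G" and "smooth_irreducible_rep G T \<rho>"
  shows "irreducible_matrix_rep G \<rho>"
proof -
  interpret group G by fact
  show ?thesis
    by unfold_locales (use assms(2) in \<open>auto simp: smooth_irreducible_rep_def\<close>)
qed

lemma profinite_smooth_rep_finite_image:
  assumes "profinite_group G T" and "smooth_irreducible_rep G T \<rho>"
  shows "finite (\<rho> ` carrier G)"
proof -
  interpret irreducible_matrix_rep G \<rho>
    using assms by (simp add: profinite_group_def smooth_irreducible_rep_imp_irreducible_matrix_rep)
  have top: "topspace T = carrier G" and "compact_space T"
    using assms(1) by (simp_all add: profinite_group_def)
  moreover have "locally_constant T \<rho>"
    using assms top by (intro locally_constant_if_smooth) (simp_all add: profinite_group_def smooth_irreducible_rep_def)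
  ultimately show ?thesis
    using finite_image_locally_constant by fastforce
qed

lemma pontryagin_dual_one:
  assumes "group gl" and "\<phi> \<in> pontryagin_dual gl Tg"
  shows "\<phi> \<one>\<^bsub>gl\<^esub> = 1"
proof -
  interpret group gl by fact
  have mult: "\<forall>x\<in>carrier gl. \<forall>y\<in>carrier gl. \<phi> (x \<otimes>\<^bsub>gl\<^esub> y) = \<phi> x * \<phi> y"
    and unit: "\<forall>x\<in>carrier gl. cmod (\<phi> x) = 1"
    using assms(2) by (simp_all add: pontryagin_dual_def)
  have "\<phi> \<one>\<^bsub>gl\<^esub> = \<phi> \<one>\<^bsub>gl\<^esub> * \<phi> \<one>\<^bsub>gl\<^esub>"
    using mult[rule_format, OF one_closed one_closed] by simp
  moreover have "\<phi> \<one>\<^bsub>gl\<^esub> \<noteq> 0" using unit[rule_format, OF one_closed] by auto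
  ultimately show ?thesis by simp
qed

lemma coadjoint_orbit_memE:
  assumes "\<Omega> \<in> coadjoint_orbits G gl Tg expm" and "condition_A G gl expm" and "group G" and "\<psi> \<in> \<Omega>"
  obtains \<phi> \<alpha> where "\<phi> \<in> pontryagin_dual gl Tg" and "\<alpha> \<in> hom gl gl"
    and "\<And>x. x \<in> carrier gl \<Longrightarrow> \<psi> x = \<phi> (\<alpha> x)"
proof -
  obtain \<phi> g where \<phi>: "\<phi> \<in> pontryagin_dual gl Tg" and g: "g \<in> carrier G"
    and \<psi>: "\<psi> = coad G gl expm g \<phi>"
    using assms(1,4) by (auto simp: coadjoint_orbits_def)
  have "Ad G gl expm (inv\<^bsub>G\<^esub> g) \<in> hom gl gl"
    using assms(2,3) g by (simp add: condition_A_def iso_def)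
  then show ?thesis using that \<phi> \<psi> by (simp add: coad_def)
qed

lemma coadjoint_orbit_unimodular:
  assumes "\<Omega> \<in> coadjoint_orbits G gl Tg expm" and "condition_A G gl expm" and "group G"
    and "\<psi> \<in> \<Omega>" and "x \<in> carrier gl"
  shows "cmod (\<psi> x) = 1"
proof -
  obtain \<phi> \<alpha> where "\<phi> \<in> pontryagin_dual gl Tg" "\<alpha> \<in> hom gl gl" "\<psi> x = \<phi> (\<alpha> x)"
    using coadjoint_orbit_memE[OF assms(1-4)] assms(5) by metis
  then show ?thesis using assms(5) by (simp add: pontryagin_dual_def hom_in_carrier)
qed

lemma coadjoint_orbit_one:
  assumes "\<Omega> \<in> coadjoint_orbits G gl Tg expm" and "condition_A G gl expm" and "group G"
    and "group gl" and "\<psi> \<in> \<Omega>"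
  shows "\<psi> \<one>\<^bsub>gl\<^esub> = 1"
proof -
  obtain \<phi> \<alpha> where "\<phi> \<in> pontryagin_dual gl Tg" "\<alpha> \<in> hom gl gl" "\<psi> \<one>\<^bsub>gl\<^esub> = \<phi> (\<alpha> \<one>\<^bsub>gl\<^esub>)"
    using coadjoint_orbit_memE[OF assms(1-3,5)] monoid.one_closed[OF group.is_monoid[OF assms(4)]] by metis
  then show ?thesis using assms(4) by (simp add: hom_one pontryagin_dual_one)
qed

lemma orbit_corresponds_card_pos:
  assumes "orbit_corresponds gl expm \<rho> \<Omega>" and "y \<in> carrier gl" and "\<rho> (expm y) = mat 1"
  shows "card \<Omega> > 0"
proof (rule ccontr)
  assume "\<not> card \<Omega> > 0"
  \<comment> \<open>then \<open>\<Omega>\<close> is infinite or empty, and the normalising factor \<open>1 / sqrt 0\<close> is \<open>0\<close>\<close>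
  then have "trace (\<rho> (expm y)) = 0"
    using assms(1,2) by (simp add: orbit_corresponds_def character_def)
  then show False using assms(3) by (simp add: trace_I)
qed

lemma orbit_corresponds_trace_eq_sqrt_card_iff:
  assumes corr: "orbit_corresponds gl expm \<rho> \<Omega>" and "card \<Omega> > 0" and x: "x \<in> carrier gl"
    and unimodular: "\<And>\<psi>. \<psi> \<in> \<Omega> \<Longrightarrow> cmod (\<psi> x) = 1"
  shows "trace (\<rho> (expm x)) = of_real (sqrt (card \<Omega>)) \<longleftrightarrow> (\<forall>\<psi>\<in>\<Omega>. \<psi> x = 1)"
proof -
  define s where "s = sqrt (real (card \<Omega>))"
  have "s > 0" and s_sq: "s * s = real (card \<Omega>)"
    using assms(2) by (simp_all add: s_def)
  have "trace (\<rho> (expm x)) = of_real s \<longleftrightarrow> of_real (1 / s) * (\<Sum>\<psi>\<in>\<Omega>. \<psi> x) = of_real s"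
    using corr x by (simp add: orbit_corresponds_def character_def s_def)
  also have "\<dots> \<longleftrightarrow> (\<Sum>\<psi>\<in>\<Omega>. \<psi> x) = of_real (s * s)"
    using \<open>s > 0\<close> by (auto simp: field_simps)
  also have "\<dots> \<longleftrightarrow> (\<forall>\<psi>\<in>\<Omega>. \<psi> x = 1)"
    unfolding s_sq using assms(2) unimodular
    by (simp add: unimodular_sum_eq_card_iff card_gt_0_iff)
  finally show ?thesis unfolding s_def .
qed

theorem mainTheorem9:
  fixes P :: "('a, 'm) monoid_scheme" and TP :: "'a topology"
    and gl :: "('g, 'k) monoid_scheme" and Tg :: "'g topology"
    and L U :: "'a set" and ll uu :: "'g set"
    and expm :: "'g \<Rightarrow> 'a"
    and \<rho> :: "'a \<Rightarrow> complex^'n^'n" and \<Omega> :: "('g \<Rightarrow> complex) set"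
  assumes P_prof: "profinite_group P TP"
    and L_sub: "subgroup L P" and L_closed: "closedin TP L"
    and U_norm: "U \<lhd> P" and U_closed: "closedin TP U"
    and P_LU: "carrier P = L <#>\<^bsub>P\<^esub> U"
    and g_prof: "profinite_group gl Tg" and g_comm: "comm_group gl"
    and ll_sub: "subgroup ll gl" and ll_closed: "closedin Tg ll"
    and uu_sub: "subgroup uu gl" and uu_closed: "closedin Tg uu"
    and g_sum: "carrier gl = ll <#>\<^bsub>gl\<^esub> uu" and g_direct: "ll \<inter> uu = {\<one>\<^bsub>gl\<^esub>}"
    and exp_homeo: "homeomorphic_map Tg TP expm"
    and exp_uu: "expm ` uu = U"
    and condA: "condition_A P gl expm"
    and condB: "condition_B P TP gl Tg expm"
    and \<Omega>_orbit: "\<Omega> \<in> coadjoint_orbits P gl Tg expm"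
    and \<tau>_irr: "smooth_irreducible_rep P TP \<rho>"
    and corr: "orbit_corresponds gl expm \<rho> \<Omega>"
  shows "(\<forall>u\<in>U. \<rho> u = mat 1) \<longleftrightarrow> (\<forall>\<psi>\<in>\<Omega>. \<forall>x\<in>uu. \<psi> x = 1)"
proof -
  have P: "group P" and gl: "group gl"
    and top: "topspace TP = carrier P" "topspace Tg = carrier gl"
    using P_prof g_prof by (simp_all add: profinite_group_def)
  interpret irreducible_matrix_rep P \<rho>
    using P \<tau>_irr by (rule smooth_irreducible_rep_imp_irreducible_matrix_rep)
  have U_carrier: "U \<subseteq> carrier P" and uu_carrier: "uu \<subseteq> carrier gl" and one_uu: "\<one>\<^bsub>gl\<^esub> \<in> uu"
    using U_norm uu_sub by (simp_all add: normal_imp_subgroup subgroup.subset subgroup.one_closed)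
  have fin_U: "finite (\<rho> ` U)"
    using profinite_smooth_rep_finite_image[OF P_prof \<tau>_irr] U_carrier by (meson finite_subset image_mono)
  obtain y where "y \<in> carrier gl" "expm y = \<one>\<^bsub>P\<^esub>"
    using homeomorphic_imp_surjective_map[OF exp_homeo] top one_closed by (metis imageE)
  then have card_pos: "card \<Omega> > 0"
    using orbit_corresponds_card_pos[OF corr] rep_one by simp
  have trace_iff: "trace (\<rho> (expm x)) = of_real (sqrt (card \<Omega>)) \<longleftrightarrow> (\<forall>\<psi>\<in>\<Omega>. \<psi> x = 1)" if "x \<in> uu" for x
    using orbit_corresponds_trace_eq_sqrt_card_iff[OF corr card_pos] that uu_carrier
      coadjoint_orbit_unimodular[OF \<Omega>_orbit condA P] by blast
  have trace_one: "trace (\<rho> (expm \<one>\<^bsub>gl\<^esub>)) = of_real (sqrt (card \<Omega>))"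
    using trace_iff[OF one_uu] coadjoint_orbit_one[OF \<Omega>_orbit condA P gl] by blast
  show ?thesis
  proof
    assume "\<forall>u\<in>U. \<rho> u = mat 1"
    then have "trace (\<rho> (expm x)) = of_real (sqrt (card \<Omega>))" if "x \<in> uu" for x
      using trace_one that one_uu exp_uu by auto
    then show "\<forall>\<psi>\<in>\<Omega>. \<forall>x\<in>uu. \<psi> x = 1" using trace_iff by blast
  next
    assume "\<forall>\<psi>\<in>\<Omega>. \<forall>x\<in>uu. \<psi> x = 1"
    then have "trace (\<rho> u) = of_real (sqrt (card \<Omega>))" if "u \<in> U" for u
      using trace_iff that exp_uu by auto
    then show "\<forall>u\<in>U. \<rho> u = mat 1"
      using trivial_on_normal_subgroup_if_trace_const[OF U_norm fin_U] card_pos by auto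
  qed
qed

end
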